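(* Let $1<p<\infty$ and $\alpha>0$. Let $f\in\mathcal{H}^1_{p,\alpha}$ have Taylor series $f(z)=\sum_{k=0}^\infty a_kz^k$. Then for every $j\in\mathbb N\cup\{0\}$, \[ \|a_jz^j\|_{p,\alpha}\le\|f\|_{p,\alpha}\qquad\text{and}\qquad |a_j|\le\frac{\left(\frac{\alpha p}{2}\right)^{j/2}}{\Gamma\left(\frac{jp}{2}+1\right)^{1/p}}\|f\|_{p,\alpha}. \] In either inequality, equality holds if and only if $f(z)$ is a constant multiple of $z^j$.
   Context: For $\alpha>0$, $\gamma^1_\alpha(dz)=(\alpha/\pi)e^{-\alpha|z|^2}\lambda(dz)$ on $\mathbb C$, with $\lambda$ Lebesgue measure. $\mathcal{H}^1_{p,\alpha}$ is the space of entire functions $f$ with $\|f\|_{p,\alpha}:=\left(\int_{\mathbb C}|f|^p\,d\gamma^1_{\alpha p/2}\right)^{1/p}<\infty$. *)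

theory Defs
  imports "HOL-Analysis.Analysis"
begin

text \<open>Density of the Gaussian measure gamma^1_beta w.r.t. Lebesgue measure on C.\<close>
definition gauss_dens :: "real \<Rightarrow> complex \<Rightarrow> real" where
  "gauss_dens \<beta> z = (\<beta> / pi) * exp (- \<beta> * (norm z)\<^sup>2)"

definition in_fock :: "real \<Rightarrow> real \<Rightarrow> (complex \<Rightarrow> complex) \<Rightarrow> bool" where
  "in_fock p \<alpha> f \<longleftrightarrow> f holomorphic_on UNIV \<and>
     integrable lborel (\<lambda>z. norm (f z) powr p * gauss_dens (\<alpha> * p / 2) z)"

definition fock_norm :: "real \<Rightarrow> real \<Rightarrow> (complex \<Rightarrow> complex) \<Rightarrow> real" where
  "fock_norm p \<alpha> f =
     (\<integral>z. norm (f z) powr p * gauss_dens (\<alpha> * p / 2) z \<partial>lborel) powr (1 / p)"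

end

theory Submission
  imports Defs
begin

text \<open>
  For a weight depending only on the modulus, the weighted integral of |f|^p is the weighted
  integral of the integrals of |f|^p over the circles t \<mapsto> cis t * z.  On such a circle the
  function t \<mapsto> f (cis t * z) * cis (- j t) has mean a_j z^j, so integrating the supporting
  hyperplane inequality of the strictly convex function |.|^p gives
  2 pi |a_j z^j|^p \<le> \<integral> |f (cis t * z)|^p dt, with equality only if f (cis t * z) = a_j z^j cis (j t).
  Integrating against the Gaussian weight yields ||a_j z^j|| \<le> ||f||; in case of equality the
  circle inequality is an equality for some z \<noteq> 0, which kills every other coefficient.  Since
  the image of Lebesgue measure under |z|^2 is pi times Lebesgue measure on [0, \<infinity>), the norm of
  a monomial is a Gamma integral, which turns the first inequality into the coefficient bound.
\<close>

section \<open>Convexity of the \<open>p\<close>-th power of the modulus\<close>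

lemma powr_mean_value:
  fixes p x y :: real
  assumes p: "1 < p" and x: "0 \<le> x" and xy: "x < y"
  obtains z where "x < z" and "z < y" and "y powr p - x powr p = (y - x) * (p * z powr (p - 1))"
proof -
  have der: "((\<lambda>x. x powr p) has_real_derivative p * t powr (p - 1)) (at t)" if "0 < t" for t
    using that by (rule has_real_derivative_powr)
  have "continuous_on {x..y} (\<lambda>x. x powr p)"
    using p x by (intro continuous_on_powr') (auto intro: continuous_intros)
  moreover have "(\<lambda>x. x powr p) differentiable (at t)" if "x < t" for t
    using der x that real_differentiable_def by (metis le_less_trans)
  ultimately obtain l z where z: "x < z" "z < y"
    and dz: "((\<lambda>x. x powr p) has_real_derivative l) (at z)" and eq: "y powr p - x powr p = (y - x) * l"
    using MVT[OF xy] by blast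
  have "l = p * z powr (p - 1)" using DERIV_unique[OF dz der] z x by auto
  then show ?thesis using that z eq by blast
qed

lemma powr_tangent_less:
  fixes p r s :: real
  assumes p: "1 < p" and r: "0 < r" and s: "0 \<le> s" and "s \<noteq> r"
  shows "r powr p + p * r powr (p - 1) * (s - r) < s powr p"
proof (cases "s < r")
  case True
  with p s obtain z where z: "s < z" "z < r" and eq: "r powr p - s powr p = (r - s) * (p * z powr (p - 1))"
    by (rule powr_mean_value)
  have "z powr (p - 1) < r powr (p - 1)" using z s p by (intro powr_less_mono2) auto
  then have "r powr p - s powr p < (r - s) * (p * r powr (p - 1))"
    using eq True p by (simp add: mult_strict_left_mono)
  then show ?thesis by (simp add: algebra_simps)
next
  case False
  with \<open>s \<noteq> r\<close> have "r < s" by simp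
  with p r obtain z where z: "r < z" "z < s" and eq: "s powr p - r powr p = (s - r) * (p * z powr (p - 1))"
    by (elim powr_mean_value) (use r in auto)
  have "r powr (p - 1) < z powr (p - 1)" using z r p by (intro powr_less_mono2) auto
  then have "(s - r) * (p * r powr (p - 1)) < s powr p - r powr p"
    using eq \<open>r < s\<close> p by (simp add: mult_strict_left_mono)
  then show ?thesis by (simp add: algebra_simps)
qed

lemma powr_tangent_le:
  fixes p r s :: real
  assumes "1 < p" and "0 < r" and "0 \<le> s"
  shows "r powr p + p * r powr (p - 1) * (s - r) \<le> s powr p"
  using powr_tangent_less[OF assms] by (cases "s = r") auto

lemma Re_cnj_mult_diff_le: "Re (cnj c * (u - c)) \<le> norm c * (norm u - norm c)"
proof -
  have "Re (cnj c * u) \<le> norm c * norm u"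
    using complex_Re_le_cmod[of "cnj c * u"] by (simp add: norm_mult)
  moreover have "Re (cnj c * c) = norm c * norm c"
    by (simp add: complex_norm_square[symmetric] mult.commute power2_eq_square)
  ultimately show ?thesis by (simp add: algebra_simps)
qed

lemma norm_powr_tangent_term_le:
  fixes p :: real and c u :: complex
  assumes "0 \<le> p"
  shows "p * norm c powr (p - 2) * Re (cnj c * (u - c)) \<le> p * norm c powr (p - 1) * (norm u - norm c)"
proof (cases "c = 0")
  case False
  have "p * norm c powr (p - 2) * Re (cnj c * (u - c)) \<le> p * norm c powr (p - 2) * (norm c * (norm u - norm c))"
    using Re_cnj_mult_diff_le assms by (intro mult_left_mono) auto
  also have "norm c powr (p - 2) * norm c = norm c powr (p - 1)"
    using False powr_add[of "norm c" "p - 2" 1] by simp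
  then have "p * norm c powr (p - 2) * (norm c * (norm u - norm c)) = p * norm c powr (p - 1) * (norm u - norm c)"
    by (metis mult.assoc mult.left_commute)
  finally show ?thesis .
qed simp

lemma norm_powr_tangent_le:
  fixes p :: real and c u :: complex
  assumes p: "1 < p"
  shows "norm c powr p + p * norm c powr (p - 2) * Re (cnj c * (u - c)) \<le> norm u powr p"
proof (cases "c = 0")
  case False
  then have "norm c powr p + p * norm c powr (p - 1) * (norm u - norm c) \<le> norm u powr p"
    by (intro powr_tangent_le[OF p]) auto
  then show ?thesis using norm_powr_tangent_term_le[of p c u] p by linarith
qed simp

lemma norm_powr_tangent_eq_imp:
  fixes p :: real and c u :: complex
  assumes p: "1 < p" and eq: "norm c powr p + p * norm c powr (p - 2) * Re (cnj c * (u - c)) = norm u powr p"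
  shows "u = c"
proof (cases "c = 0")
  case True
  then show ?thesis using eq by simp
next
  case False
  then have r: "0 < norm c" by simp
  have norm_u: "norm u = norm c"
  proof (rule ccontr)
    assume "norm u \<noteq> norm c"
    then have "norm c powr p + p * norm c powr (p - 1) * (norm u - norm c) < norm u powr p"
      using p r by (intro powr_tangent_less) auto
    then show False using eq norm_powr_tangent_term_le[of p c u] p by linarith
  qed
  then have "Re (cnj c * (u - c)) = 0"
    using eq r p by simp
  then have "Re (cnj c * u) = norm (cnj c * u)"
    using norm_u by (simp add: norm_mult algebra_simps cmod_power2 flip: power2_eq_square)
  then have "Im (cnj c * u) = 0"
    using norm_eq_Re_iff complex_nonneg_Reals_iff by metis
  with \<open>Re (cnj c * (u - c)) = 0\<close> have "cnj c * u = cnj c * c"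
    by (simp add: complex_eq_iff algebra_simps)
  then show ?thesis using False by simp
qed

(* The integrand is the gap between |.|^p and its tangent plane at the mean value c of u. *)
lemma has_integral_norm_powr_defect:
  fixes u :: "real \<Rightarrow> complex" and a b p :: real
  assumes p: "1 < p" and "a \<le> b" and cont: "continuous_on {a..b} u"
    and hu: "(u has_integral (b - a) *\<^sub>R c) {a..b}"
  shows "((\<lambda>t. norm (u t) powr p - (norm c powr p + p * norm c powr (p - 2) * Re (cnj c * (u t - c))))
           has_integral (integral {a..b} (\<lambda>t. norm (u t) powr p) - (b - a) * norm c powr p)) {a..b}"
proof -
  have "(\<lambda>t. norm (u t) powr p) integrable_on {a..b}"
    using p by (intro integrable_continuous_interval continuous_on_powr' continuous_intros cont) auto
  moreover have uc: "((\<lambda>t. u t - c) has_integral 0) {a..b}"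
    using has_integral_diff[OF hu has_integral_const_real[of c a b]] \<open>a \<le> b\<close> by simp
  then have "((\<lambda>t. Re (cnj c * (u t - c))) has_integral 0) {a..b}"
    using has_integral_linear[OF has_integral_mult_right[OF uc, of "cnj c"] bounded_linear_Re]
    by (simp add: o_def)
  ultimately have "((\<lambda>t. norm (u t) powr p - (norm c powr p + p * norm c powr (p - 2) * Re (cnj c * (u t - c))))
      has_integral (integral {a..b} (\<lambda>t. norm (u t) powr p)
                    - (measure lborel {a..b} *\<^sub>R norm c powr p + p * norm c powr (p - 2) * 0))) {a..b}"
    by (intro has_integral_diff has_integral_add integrable_integral has_integral_const_real
        has_integral_mult_right)
  then show ?thesis using \<open>a \<le> b\<close> by simp
qed

lemma norm_powr_integral_ge:
  fixes u :: "real \<Rightarrow> complex" and a b p :: real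
  assumes "1 < p" and "a \<le> b" and "continuous_on {a..b} u"
    and "(u has_integral (b - a) *\<^sub>R c) {a..b}"
  shows "(b - a) * norm c powr p \<le> integral {a..b} (\<lambda>t. norm (u t) powr p)"
proof -
  have "0 \<le> integral {a..b} (\<lambda>t. norm (u t) powr p) - (b - a) * norm c powr p"
    by (rule has_integral_nonneg[OF has_integral_norm_powr_defect[OF assms]])
      (use norm_powr_tangent_le[OF \<open>1 < p\<close>] in auto)
  then show ?thesis by simp
qed

lemma norm_powr_integral_eq_imp:
  fixes u :: "real \<Rightarrow> complex" and a b p :: real
  assumes p: "1 < p" and "a < b" and cont: "continuous_on {a..b} u"
    and hu: "(u has_integral (b - a) *\<^sub>R c) {a..b}"
    and eq: "integral {a..b} (\<lambda>t. norm (u t) powr p) = (b - a) * norm c powr p"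
    and t: "t \<in> {a..b}"
  shows "u t = c"
proof -
  define D where "D t = norm (u t) powr p - (norm c powr p + p * norm c powr (p - 2) * Re (cnj c * (u t - c)))" for t
  have D0: "(D has_integral 0) (cbox a b)"
    using has_integral_norm_powr_defect[OF p _ cont hu] eq \<open>a < b\<close> by (simp add: D_def[abs_def])
  have "continuous_on (cbox a b) D"
    unfolding D_def using p by (auto intro!: continuous_intros continuous_on_powr' cont)
  then have "D t = 0"
    using \<open>a < b\<close> t norm_powr_tangent_le[OF p]
    by (intro has_integral_0_cbox_imp_0[OF _ _ D0]) (auto simp: D_def)
  then show ?thesis using norm_powr_tangent_eq_imp[OF p] by (simp add: D_def)
qed

section \<open>Power series on circles\<close>

lemma has_integral_cis_int:
  fixes n :: int
  shows "((\<lambda>t. cis (of_int n * t)) has_integral (if n = 0 then complex_of_real (2*pi) else 0)) {0..2*pi}"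
proof (cases "n = 0")
  case True
  then show ?thesis using has_integral_const_real[of "1::complex" 0 "2*pi"]
    by (simp add: scaleR_conv_of_real)
next
  case False
  define F where "F t = cis (of_int n * t) / (\<i> * of_int n)" for t
  have "((\<lambda>t. cis (of_int n * t)) has_integral (F (2*pi) - F 0)) {0..2*pi}"
  proof (rule fundamental_theorem_of_calculus)
    fix x assume "x \<in> {0..2*pi}"
    have "((\<lambda>t. cis (of_int n * t)) has_derivative (\<lambda>h. (of_int n * h) *\<^sub>R (\<i> * cis (of_int n * x)))) (at x within {0..2*pi})"
      by (intro has_derivative_cis derivative_eq_intros) auto
    then have "((\<lambda>t. cis (of_int n * t)) has_vector_derivative of_int n *\<^sub>R (\<i> * cis (of_int n * x))) (at x within {0..2*pi})"
      unfolding has_vector_derivative_def by (simp add: scaleR_scaleR mult.commute)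
    then have "(F has_vector_derivative (of_int n *\<^sub>R (\<i> * cis (of_int n * x))) / (\<i> * of_int n)) (at x within {0..2*pi})"
      unfolding F_def by (intro has_vector_derivative_divide)
    moreover have "(of_int n *\<^sub>R (\<i> * cis (of_int n * x))) / (\<i> * of_int n) = cis (of_int n * x)"
      using False by (simp add: scaleR_conv_of_real field_simps)
    ultimately show "(F has_vector_derivative cis (of_int n * x)) (at x within {0..2*pi})" by simp
  qed simp
  moreover have "cis (of_int n * (2*pi)) = 1"
    using cis_multiple_2pi[of "of_int n"] by (simp add: mult.commute mult.left_commute)
  then have "F (2*pi) - F 0 = 0" by (simp add: F_def)
  ultimately show ?thesis using False by simp
qed

(* The series converges uniformly on the circle through z, so it may be integrated termwise. *)
lemma has_integral_power_series_coeff: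
  fixes f :: "complex \<Rightarrow> complex" and a :: "nat \<Rightarrow> complex"
  assumes S: "\<And>z. (\<lambda>k. a k * z ^ k) sums f z"
  shows "((\<lambda>t. f (cis t * z) * cis (- (real k * t))) has_integral 2 * pi * (a k * z ^ k)) {0..2*pi}"
proof -
  define h where "h m t = a m * z^m * cis (of_int (int m - int k) * t)" for m t
  have h_sums: "(\<lambda>m. h m t) sums (f (cis t * z) * cis (- (real k * t)))" for t
  proof -
    have summand: "a m * (cis t * z)^m * cis (- (real k * t)) = h m t" for m
    proof -
      have "(cis t * z)^m * cis (- (real k * t)) = z^m * (cis (real m * t) * cis (- (real k * t)))"
        using Complex.DeMoivre[of t m] by (simp add: power_mult_distrib)
      also have "cis (real m * t) * cis (- (real k * t)) = cis (of_int (int m - int k) * t)"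
        by (simp add: cis_mult algebra_simps)
      finally show ?thesis by (simp add: h_def mult.assoc)
    qed
    have "(\<lambda>m. a m * (cis t * z)^m * cis (- (real k * t))) sums (f (cis t * z) * cis (- (real k * t)))"
      by (rule sums_mult2[OF S])
    then show ?thesis by (simp only: summand)
  qed
  define M where "M m = norm (a m * z^m)" for m
  have "summable (\<lambda>n. a n * (complex_of_real (norm z + 1))^n)"
    using S sums_summable by blast
  then have "summable M" unfolding M_def by (rule powser_insidea) simp
  then have "uniform_limit {0..2*pi} (\<lambda>n t. \<Sum>m<n. h m t) (\<lambda>t. \<Sum>m. h m t) sequentially"
    by (rule Weierstrass_m_test[rotated]) (simp add: h_def M_def norm_mult)
  moreover have "continuous_on {0..2*pi} (\<lambda>t. \<Sum>m<n. h m t)" for n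
    unfolding h_def by (intro continuous_intros)
  ultimately obtain I J where I: "\<And>n. ((\<lambda>t. \<Sum>m<n. h m t) has_integral I n) {0..2*pi}"
    and J: "((\<lambda>t. \<Sum>m. h m t) has_integral J) {0..2*pi}" and "I \<longlonglongrightarrow> J"
    by (rule uniform_limit_integral) auto
  have h_int: "(h m has_integral (if m = k then 2 * pi * (a k * z^k) else 0)) {0..2*pi}" for m
    using has_integral_mult_right[OF has_integral_cis_int[of "int m - int k"], of "a m * z^m"]
    by (cases "m = k") (simp_all add: h_def[abs_def] mult_ac)
  have I_eq: "I n = (\<Sum>m<n. if m = k then 2 * pi * (a k * z^k) else 0)" for n
    using has_integral_unique[OF I has_integral_sum[OF _ h_int]] by simp
  have "eventually (\<lambda>n. I n = 2 * pi * (a k * z^k)) sequentially"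
    using eventually_ge_at_top[of "Suc k"] by eventually_elim (auto simp: I_eq sum.delta)
  then have "J = 2 * pi * (a k * z^k)"
    using \<open>I \<longlonglongrightarrow> J\<close> tendsto_eventually LIMSEQ_unique by blast
  moreover have "(\<lambda>t. \<Sum>m. h m t) = (\<lambda>t. f (cis t * z) * cis (- (real k * t)))"
    using h_sums sums_unique by metis
  ultimately show ?thesis using J by simp
qed

lemma power_series_coeff_eq_if_monomial:
  fixes f :: "complex \<Rightarrow> complex" and a :: "nat \<Rightarrow> complex"
  assumes S: "\<And>z. (\<lambda>k. a k * z ^ k) sums f z" and f: "\<And>z. f z = c * z ^ j"
  shows "a j = c"
proof -
  have "f (cis t * 1) * cis (- (real j * t)) = c" for t
    using f Complex.DeMoivre[of t j] by (simp add: cis_mult)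
  then have "((\<lambda>t. f (cis t * 1) * cis (- (real j * t))) has_integral 2 * pi * c) {0..2*pi}"
    using has_integral_const_real[of c 0 "2*pi"] by (simp add: scaleR_conv_of_real)
  then have "2 * pi * (a j * 1 ^ j) = 2 * pi * c"
    by (rule has_integral_unique[OF has_integral_power_series_coeff[OF S, of 1 j]])
  then show ?thesis by simp
qed

lemma power_series_eq_monomial_if_circle:
  fixes f :: "complex \<Rightarrow> complex" and a :: "nat \<Rightarrow> complex"
  assumes S: "\<And>z. (\<lambda>k. a k * z ^ k) sums f z" and "z\<^sub>0 \<noteq> 0"
    and circle: "\<And>t. t \<in> {0..2*pi} \<Longrightarrow> f (cis t * z\<^sub>0) = b * cis (real j * t)"
  shows "f z = a j * z ^ j"
proof -
  have "a k = 0" if "k \<noteq> j" for k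
  proof -
    have "((\<lambda>t. b * cis (of_int (int j - int k) * t)) has_integral 0) {0..2*pi}"
      using has_integral_mult_right[OF has_integral_cis_int[of "int j - int k"], of b] that by simp
    moreover have "b * cis (of_int (int j - int k) * t) = f (cis t * z\<^sub>0) * cis (- (real k * t))"
      if "t \<in> {0..2*pi}" for t
      using circle[OF that] by (simp add: mult.assoc cis_mult algebra_simps)
    ultimately have "((\<lambda>t. f (cis t * z\<^sub>0) * cis (- (real k * t))) has_integral 0) {0..2*pi}"
      by (rule has_integral_eq[rotated])
    then have "2 * pi * (a k * z\<^sub>0 ^ k) = 0"
      using has_integral_unique[OF has_integral_power_series_coeff[OF S]] by blast
    then show ?thesis using \<open>z\<^sub>0 \<noteq> 0\<close> by simp
  qed
  then have "(\<lambda>k. a k * z ^ k) = (\<lambda>k. if k = j then a j * z ^ j else 0)"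
    by auto
  then have "(\<lambda>k. a k * z ^ k) sums (a j * z ^ j)"
    using sums_single[of j "\<lambda>_. a j * z ^ j"] by simp
  then show ?thesis using S sums_unique2 by blast
qed

definition circle_powr_integral :: "real \<Rightarrow> (complex \<Rightarrow> complex) \<Rightarrow> complex \<Rightarrow> real" where
  "circle_powr_integral p f z = integral {0..2*pi} (\<lambda>t. norm (f (cis t * z)) powr p)"

lemma has_integral_circle_powr_integral:
  assumes "0 < p" and "continuous_on UNIV f"
  shows "((\<lambda>t. norm (f (cis t * z)) powr p) has_integral circle_powr_integral p f z) {0..2*pi}"
  unfolding circle_powr_integral_def using assms
  by (intro integrable_integral integrable_continuous_interval continuous_on_powr'
      continuous_on_compose2[OF assms(2)] continuous_intros) auto

lemma
  fixes f :: "complex \<Rightarrow> complex" and a :: "nat \<Rightarrow> complex"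
  assumes p: "1 < p" and S: "\<And>z. (\<lambda>k. a k * z ^ k) sums f z" and contf: "continuous_on UNIV f"
  shows circle_powr_integral_ge: "2 * pi * norm (a j * z ^ j) powr p \<le> circle_powr_integral p f z"
    and circle_powr_integral_eq_imp:
      "circle_powr_integral p f z = 2 * pi * norm (a j * z ^ j) powr p \<Longrightarrow> t \<in> {0..2*pi}
        \<Longrightarrow> f (cis t * z) = a j * z ^ j * cis (real j * t)"
proof -
  define u where "u t = f (cis t * z) * cis (- (real j * t))" for t
  have norm_u: "norm (u t) = norm (f (cis t * z))" for t
    by (simp add: u_def norm_mult)
  have cont: "continuous_on {0..2*pi} u"
    unfolding u_def by (intro continuous_intros continuous_on_compose2[OF contf]) auto
  have hu: "(u has_integral (2 * pi - 0) *\<^sub>R (a j * z ^ j)) {0..2*pi}"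
    using has_integral_power_series_coeff[OF S, of z j] by (simp add: u_def[abs_def] scaleR_conv_of_real)
  show "2 * pi * norm (a j * z ^ j) powr p \<le> circle_powr_integral p f z"
    using norm_powr_integral_ge[OF p _ cont hu] by (simp add: circle_powr_integral_def norm_u)
  assume "circle_powr_integral p f z = 2 * pi * norm (a j * z ^ j) powr p" and "t \<in> {0..2*pi}"
  then have "u t = a j * z ^ j"
    by (intro norm_powr_integral_eq_imp[OF p _ cont hu]) (simp_all add: circle_powr_integral_def norm_u)
  moreover have "f (cis t * z) = u t * cis (real j * t)"
    by (simp add: u_def mult.assoc cis_mult)
  ultimately show "f (cis t * z) = a j * z ^ j * cis (real j * t)" by simp
qed

section \<open>Rotation invariance of Lebesgue measure on the plane\<close>

lemma borel_measurable_Complex[measurable]: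
  fixes f g :: "'a \<Rightarrow> real"
  assumes [measurable]: "f \<in> borel_measurable M" "g \<in> borel_measurable M"
  shows "(\<lambda>x. Complex (f x) (g x)) \<in> borel_measurable M"
proof -
  have "(\<lambda>x. Complex (f x) (g x)) = (\<lambda>x. complex_of_real (f x) + \<i> * complex_of_real (g x))"
    by (auto simp: fun_eq_iff Complex_eq)
  also have "\<dots> \<in> borel_measurable M" by measurable
  finally show ?thesis .
qed

lemma borel_measurable_Complex_pair[measurable]:
  "(\<lambda>x::real\<times>real. Complex (fst x) (snd x)) \<in> borel_measurable borel"
proof -
  have "(\<lambda>x::real\<times>real. Complex (fst x) (snd x)) = (\<lambda>z::real\<times>real. complex_of_real (fst z) + \<i> * complex_of_real (snd z))"
    by (auto simp: fun_eq_iff Complex_eq)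
  also have "\<dots> \<in> borel_measurable borel"
    by (intro borel_measurable_continuous_onI continuous_intros)
  finally show ?thesis .
qed

lemma lborel_complex_conv_distr:
  "(lborel :: complex measure) = distr (lborel :: (real \<times> real) measure) borel (\<lambda>(x,y). Complex x y)"
proof (rule lborel_eqI)
  fix l u :: complex
  assume le: "\<And>b. b \<in> Basis \<Longrightarrow> l \<bullet> b \<le> u \<bullet> b"
  have meas: "(\<lambda>(x,y). Complex x y) \<in> borel_measurable (lborel :: (real \<times> real) measure)"
    using borel_measurable_Complex_pair by (simp add: case_prod_beta')
  have pre: "(\<lambda>(x,y). Complex x y) -` box l u = box (Re l, Im l) (Re u, Im u)"
    by (auto simp: box_def Basis_complex_def Basis_prod_def inner_complex_def)
  have le2: "Re l \<le> Re u" "Im l \<le> Im u" using le[of 1] le[of "\<i>"] by (auto simp: Basis_complex_def inner_complex_def)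
  show "emeasure (distr lborel borel (\<lambda>(x,y). Complex x y)) (box l u) = ennreal (\<Prod>b\<in>Basis. (u - l) \<bullet> b)"
    using le2
    by (subst emeasure_distr[OF meas]) (auto simp: pre emeasure_lborel_box_eq Basis_complex_def Basis_prod_def inner_complex_def)
qed simp

lemma nn_integral_lborel_complex:
  fixes g :: "complex \<Rightarrow> ennreal"
  assumes [measurable]: "g \<in> borel_measurable borel"
  shows "(\<integral>\<^sup>+z. g z \<partial>lborel) = (\<integral>\<^sup>+x. \<integral>\<^sup>+y. g (Complex x y) \<partial>lborel \<partial>lborel)"
proof -
  have "(\<integral>\<^sup>+z. g z \<partial>lborel) = (\<integral>\<^sup>+z. g z \<partial>(distr (lborel :: (real \<times> real) measure) borel (\<lambda>(x,y). Complex x y)))"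
    by (subst lborel_complex_conv_distr[symmetric]) simp
  also have "\<dots> = (\<integral>\<^sup>+xy. g (case xy of (x,y) \<Rightarrow> Complex x y) \<partial>(lborel :: (real \<times> real) measure))"
    by (subst nn_integral_distr) (auto simp: case_prod_beta')
  also have "\<dots> = (\<integral>\<^sup>+xy. g (case xy of (x,y) \<Rightarrow> Complex x y) \<partial>(lborel \<Otimes>\<^sub>M lborel))"
    by (simp add: lborel_prod)
  also have "\<dots> = (\<integral>\<^sup>+x. \<integral>\<^sup>+y. g (Complex x y) \<partial>lborel \<partial>lborel)"
    by (subst lborel.nn_integral_fst[symmetric]) (auto simp: case_prod_beta')
  finally show ?thesis .
qed

definition shear_Re :: "real \<Rightarrow> complex \<Rightarrow> complex" where
  "shear_Re a z = Complex (Re z + a * Im z) (Im z)"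

definition shear_Im :: "real \<Rightarrow> complex \<Rightarrow> complex" where
  "shear_Im a z = Complex (Re z) (Im z + a * Re z)"

lemma borel_measurable_shear_Re[measurable]: "shear_Re a \<in> borel_measurable borel"
  unfolding shear_Re_def[abs_def] by measurable

lemma borel_measurable_shear_Im[measurable]: "shear_Im a \<in> borel_measurable borel"
  unfolding shear_Im_def[abs_def] by measurable

lemma nn_integral_shear_Re:
  fixes g :: "complex \<Rightarrow> ennreal"
  assumes [measurable]: "g \<in> borel_measurable borel"
  shows "(\<integral>\<^sup>+z. g (shear_Re a z) \<partial>lborel) = (\<integral>\<^sup>+z. g z \<partial>lborel)"
proof -
  have "(\<integral>\<^sup>+z. g (shear_Re a z) \<partial>lborel)
      = (\<integral>\<^sup>+x. \<integral>\<^sup>+y. g (Complex (x + a * y) y) \<partial>lborel \<partial>lborel)"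
    unfolding shear_Re_def by (subst nn_integral_lborel_complex) auto
  also have "\<dots> = (\<integral>\<^sup>+y. \<integral>\<^sup>+x. g (Complex (x + a * y) y) \<partial>lborel \<partial>lborel)"
    by (rule lborel_pair.Fubini'[symmetric]) (simp add: case_prod_beta')
  also have "\<dots> = (\<integral>\<^sup>+y. \<integral>\<^sup>+x. g (Complex x y) \<partial>lborel \<partial>lborel)"
  proof (rule nn_integral_cong)
    fix y :: real
    show "(\<integral>\<^sup>+x. g (Complex (x + a * y) y) \<partial>lborel) = (\<integral>\<^sup>+x. g (Complex x y) \<partial>lborel)"
      using nn_integral_real_affine[of "\<lambda>x. g (Complex x y)" 1 "a * y"] by (simp add: add.commute)
  qed
  also have "\<dots> = (\<integral>\<^sup>+x. \<integral>\<^sup>+y. g (Complex x y) \<partial>lborel \<partial>lborel)"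
    by (rule lborel_pair.Fubini') (simp add: case_prod_beta')
  also have "\<dots> = (\<integral>\<^sup>+z. g z \<partial>lborel)"
    by (subst nn_integral_lborel_complex) auto
  finally show ?thesis .
qed

lemma nn_integral_shear_Im:
  fixes g :: "complex \<Rightarrow> ennreal"
  assumes [measurable]: "g \<in> borel_measurable borel"
  shows "(\<integral>\<^sup>+z. g (shear_Im a z) \<partial>lborel) = (\<integral>\<^sup>+z. g z \<partial>lborel)"
proof -
  have "(\<integral>\<^sup>+z. g (shear_Im a z) \<partial>lborel)
      = (\<integral>\<^sup>+x. \<integral>\<^sup>+y. g (Complex x (y + a * x)) \<partial>lborel \<partial>lborel)"
    unfolding shear_Im_def by (subst nn_integral_lborel_complex) auto
  also have "\<dots> = (\<integral>\<^sup>+x. \<integral>\<^sup>+y. g (Complex x y) \<partial>lborel \<partial>lborel)"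
  proof (rule nn_integral_cong)
    fix x :: real
    show "(\<integral>\<^sup>+y. g (Complex x (y + a * x)) \<partial>lborel) = (\<integral>\<^sup>+y. g (Complex x y) \<partial>lborel)"
      using nn_integral_real_affine[of "\<lambda>y. g (Complex x y)" 1 "a * x"] by (simp add: add.commute)
  qed
  also have "\<dots> = (\<integral>\<^sup>+z. g z \<partial>lborel)"
    by (subst nn_integral_lborel_complex) auto
  finally show ?thesis .
qed

(* Paeth's decomposition: with u = cis \<theta>, the parameters are -tan (\<theta>/2) and sin \<theta>. *)
lemma unit_mult_eq_shears:
  assumes u: "norm u = 1" "u \<noteq> -1"
  defines "t \<equiv> - Im u / (1 + Re u)"
  shows "u * z = shear_Re t (shear_Im (Im u) (shear_Re t z))"
proof -
  define c s where "c = Re u" and "s = Im u"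
  have cs: "c^2 + s^2 = 1" using u(1) cmod_power2[of u] by (simp add: c_def s_def)
  have "1 + c \<noteq> 0"
  proof
    assume "1 + c = 0"
    then have "c = -1" by simp
    with cs have "s = 0" by simp
    with \<open>c = -1\<close> have "u = -1" by (simp add: c_def s_def complex_eq_iff)
    with u(2) show False by simp
  qed
  have ts: "t * s = c - 1"
  proof -
    have "t * s = - (s^2) / (1 + c)" by (simp add: t_def c_def s_def power2_eq_square)
    also have "- (s^2) = (c - 1) * (1 + c)" using cs by (simp add: algebra_simps power2_eq_square)
    finally show ?thesis using \<open>1 + c \<noteq> 0\<close> by simp
  qed
  have "t * (2 + t * s) = t * (1 + c)" using ts by simp
  also have "\<dots> = - s" using \<open>1 + c \<noteq> 0\<close> by (simp add: t_def c_def s_def)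
  finally have t2: "t * (2 + t * s) = - s" .
  have t1: "1 + t * s = c" using ts by simp
  let ?w = "shear_Re t (shear_Im s (shear_Re t z))"
  have "Re ?w = Re z * (1 + t * s) + Im z * (t * (2 + t * s))"
    by (simp add: shear_Re_def shear_Im_def algebra_simps)
  also have "\<dots> = Re (u * z)"
    unfolding t1 t2 by (simp add: c_def s_def)
  finally have "Re ?w = Re (u * z)" .
  have "Im ?w = s * Re z + Im z * (1 + t * s)"
    by (simp add: shear_Re_def shear_Im_def algebra_simps)
  also have "\<dots> = Im (u * z)"
    unfolding t1 by (simp add: c_def s_def)
  finally have "Im ?w = Im (u * z)" .
  with \<open>Re ?w = Re (u * z)\<close> show ?thesis by (simp add: complex_eq_iff s_def)
qed

lemma nn_integral_lborel_mult_unit_ne_minus_one: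
  fixes g :: "complex \<Rightarrow> ennreal"
  assumes [measurable]: "g \<in> borel_measurable borel" and u: "norm u = 1" "u \<noteq> -1"
  shows "(\<integral>\<^sup>+z. g (u * z) \<partial>lborel) = (\<integral>\<^sup>+z. g z \<partial>lborel)"
proof -
  define t where "t = - Im u / (1 + Re u)"
  have "(\<integral>\<^sup>+z. g (u * z) \<partial>lborel) = (\<integral>\<^sup>+z. g (shear_Re t (shear_Im (Im u) (shear_Re t z))) \<partial>lborel)"
    by (simp add: unit_mult_eq_shears[OF u] t_def)
  also have "\<dots> = (\<integral>\<^sup>+z. g (shear_Re t (shear_Im (Im u) z)) \<partial>lborel)"
    by (rule nn_integral_shear_Re[where g = "\<lambda>z. g (shear_Re t (shear_Im (Im u) z))"]) measurable
  also have "\<dots> = (\<integral>\<^sup>+z. g (shear_Re t z) \<partial>lborel)"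
    by (rule nn_integral_shear_Im[where g = "\<lambda>z. g (shear_Re t z)"]) measurable
  also have "\<dots> = (\<integral>\<^sup>+z. g z \<partial>lborel)"
    by (rule nn_integral_shear_Re) measurable
  finally show ?thesis .
qed

lemma nn_integral_lborel_mult_unit:
  fixes g :: "complex \<Rightarrow> ennreal"
  assumes [measurable]: "g \<in> borel_measurable borel" and u: "norm u = 1"
  shows "(\<integral>\<^sup>+z. g (u * z) \<partial>lborel) = (\<integral>\<^sup>+z. g z \<partial>lborel)"
proof (cases "u = -1")
  case True
  have "(\<integral>\<^sup>+z. g (u * z) \<partial>lborel) = (\<integral>\<^sup>+z. (\<lambda>w. g (\<i> * w)) (\<i> * z) \<partial>lborel)"
    using True by (simp add: mult.assoc[symmetric])
  also have "\<dots> = (\<integral>\<^sup>+w. g (\<i> * w) \<partial>lborel)"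
    by (rule nn_integral_lborel_mult_unit_ne_minus_one) (auto simp: complex_eq_iff)
  also have "\<dots> = (\<integral>\<^sup>+w. g w \<partial>lborel)"
    by (rule nn_integral_lborel_mult_unit_ne_minus_one) (auto simp: complex_eq_iff)
  finally show ?thesis .
next
  case False
  then show ?thesis using nn_integral_lborel_mult_unit_ne_minus_one u by simp
qed

lemma borel_measurable_cis_mult_pair[measurable]:
  "(\<lambda>x::complex \<times> real. cis (snd x) * fst x) \<in> borel_measurable (lborel \<Otimes>\<^sub>M lborel)"
proof -
  have "(\<lambda>x::complex \<times> real. cis (snd x) * fst x) \<in> borel_measurable borel"
    by (intro borel_measurable_continuous_onI continuous_intros)
  then show ?thesis unfolding lborel_prod by simp
qed

lemma nn_integral_rotation_average:
  fixes H :: "complex \<Rightarrow> ennreal"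
  assumes [measurable]: "H \<in> borel_measurable borel"
  shows "(\<integral>\<^sup>+z. \<integral>\<^sup>+t. H (cis t * z) * indicator {0..2*pi} t \<partial>lborel \<partial>lborel) = ennreal (2*pi) * (\<integral>\<^sup>+z. H z \<partial>lborel)"
proof -
  have "(\<integral>\<^sup>+z. \<integral>\<^sup>+t. H (cis t * z) * indicator {0..2*pi} t \<partial>lborel \<partial>lborel)
     = (\<integral>\<^sup>+t. \<integral>\<^sup>+z. H (cis t * z) * indicator {0..2*pi} t \<partial>lborel \<partial>lborel)"
    by (rule lborel_pair.Fubini'[symmetric]) (simp add: case_prod_beta')
  also have "\<dots> = (\<integral>\<^sup>+t. (\<integral>\<^sup>+z. H z \<partial>lborel) * indicator {0..2*pi} t \<partial>lborel)"
    by (intro nn_integral_cong) (simp add: nn_integral_multc nn_integral_lborel_mult_unit)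
  also have "\<dots> = ennreal (2*pi) * (\<integral>\<^sup>+z. H z \<partial>lborel)"
    by (simp add: nn_integral_cmult mult.commute)
  finally show ?thesis .
qed

section \<open>Gaussian moments\<close>

lemma emeasure_lborel_norm_sq_less:
  "emeasure lborel {z::complex. (norm z)^2 < r} = ennreal (pi * max 0 r)"
proof (cases "0 < r")
  case True
  have "{z::complex. (norm z)^2 < r} = ball 0 (sqrt r)"
  proof (intro set_eqI iffI)
    fix z :: complex assume "z \<in> {z. (norm z)^2 < r}"
    then show "z \<in> ball 0 (sqrt r)" by (simp add: real_less_rsqrt)
  next
    fix z :: complex assume "z \<in> ball 0 (sqrt r)"
    then have "(norm z)^2 < (sqrt r)^2" by (intro power_strict_mono) auto
    then show "z \<in> {z. (norm z)^2 < r}" using True by simp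
  qed
  then show ?thesis using True by (simp add: emeasure_ball unit_ball_vol_2)
next
  case False
  then have "{z::complex. (norm z)^2 < r} = {}"
    by (auto simp: not_less) (meson le_less_trans not_le zero_le_power2)
  then show ?thesis using False by simp
qed

(* The negation makes the half-lines {x<..} generating the Borel sets pull back to discs. *)
lemma distr_lborel_minus_scaled_norm_sq:
  assumes \<beta>: "0 < \<beta>"
  shows "distr (lborel :: complex measure) borel (\<lambda>z. - (\<beta> * (norm z)^2))
       = density lborel (\<lambda>t. ennreal (pi / \<beta>) * indicator {..0} t)"
proof (rule measure_eqI_lessThan)
  fix x :: real
  have "(\<lambda>z::complex. - (\<beta> * (norm z)^2)) -` {x<..} = {z. (norm z)^2 < - x / \<beta>}"
    using \<beta> by (auto simp: field_simps)
  then have "emeasure (distr (lborel :: complex measure) borel (\<lambda>z. - (\<beta> * (norm z)^2))) {x<..}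
      = emeasure lborel {z::complex. (norm z)^2 < - x / \<beta>}"
    by (subst emeasure_distr) auto
  also have "\<dots> = ennreal (pi / \<beta> * max 0 (- x))"
    using \<beta> by (simp only: emeasure_lborel_norm_sq_less) (auto simp: max_def field_simps)
  finally have distr_eq: "emeasure (distr (lborel :: complex measure) borel (\<lambda>z. - (\<beta> * (norm z)^2))) {x<..}
      = ennreal (pi / \<beta> * max 0 (- x))" .
  then show "emeasure (distr (lborel :: complex measure) borel (\<lambda>z. - (\<beta> * (norm z)^2))) {x<..} < \<infinity>"
    by simp
  have "emeasure (density lborel (\<lambda>t. ennreal (pi / \<beta>) * indicator {..0} t)) {x<..}
      = (\<integral>\<^sup>+t. ennreal (pi / \<beta>) * indicator {x<..0} t \<partial>lborel)"
    by (subst emeasure_density) (auto intro!: nn_integral_cong split: split_indicator)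
  also have "\<dots> = ennreal (pi / \<beta> * max 0 (- x))"
    using \<beta> by (subst nn_integral_cmult) (auto simp: ennreal_mult[symmetric] max_def field_simps)
  finally show "emeasure (distr (lborel :: complex measure) borel (\<lambda>z. - (\<beta> * (norm z)^2))) {x<..}
      = emeasure (density lborel (\<lambda>t. ennreal (pi / \<beta>) * indicator {..0} t)) {x<..}"
    using distr_eq by simp
qed auto

lemma nn_integral_scaled_norm_sq_complex:
  fixes H :: "real \<Rightarrow> ennreal"
  assumes [measurable]: "H \<in> borel_measurable borel" and \<beta>: "0 < \<beta>"
  shows "(\<integral>\<^sup>+z. H (\<beta> * (norm z)^2) \<partial>(lborel :: complex measure))
       = ennreal (pi / \<beta>) * (\<integral>\<^sup>+s. H s * indicator {0..} s \<partial>lborel)"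
proof -
  have "(\<integral>\<^sup>+z. H (\<beta> * (norm z)^2) \<partial>(lborel :: complex measure))
      = (\<integral>\<^sup>+t. H (- t) \<partial>(distr (lborel :: complex measure) borel (\<lambda>z. - (\<beta> * (norm z)^2))))"
    by (subst nn_integral_distr) auto
  also have "\<dots> = (\<integral>\<^sup>+t. ennreal (pi / \<beta>) * indicator {..0} t * H (- t) \<partial>lborel)"
    unfolding distr_lborel_minus_scaled_norm_sq[OF \<beta>] by (subst nn_integral_density) auto
  also have "\<dots> = ennreal (pi / \<beta>) * (\<integral>\<^sup>+t. H (- t) * indicator {0..} (- t) \<partial>lborel)"
    by (subst nn_integral_cmult[symmetric]) (auto intro!: nn_integral_cong split: split_indicator simp: mult_ac)
  also have "(\<integral>\<^sup>+t. H (- t) * indicator {0..} (- t) \<partial>lborel) = (\<integral>\<^sup>+s. H s * indicator {0..} s \<partial>lborel)"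
    using nn_integral_real_affine[of "\<lambda>s. H s * indicator {0..} s" "-1" 0] by simp
  finally show ?thesis .
qed

lemma nn_integral_norm_sq_powr_gauss_dens:
  fixes \<beta> q :: real
  assumes \<beta>: "0 < \<beta>" and q: "0 \<le> q"
  shows "(\<integral>\<^sup>+z. ennreal (((norm z)^2) powr q * gauss_dens \<beta> z) \<partial>(lborel :: complex measure))
       = ennreal (Gamma (q + 1) / \<beta> powr q)"
proof -
  define c where "c = \<beta> / pi / \<beta> powr q"
  have c: "0 < c" using \<beta> by (simp add: c_def)
  have "(\<integral>\<^sup>+z. ennreal (((norm z)^2) powr q * gauss_dens \<beta> z) \<partial>(lborel :: complex measure))
      = (\<integral>\<^sup>+z. (\<lambda>s. ennreal (c * (s powr q * exp (- s)))) (\<beta> * (norm z)^2) \<partial>(lborel :: complex measure))"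
    using \<beta> by (intro nn_integral_cong) (simp add: gauss_dens_def c_def powr_mult field_simps)
  also have "\<dots> = ennreal (pi / \<beta>) * (\<integral>\<^sup>+s. ennreal (c * (s powr q * exp (- s))) * indicator {0..} s \<partial>lborel)"
    by (rule nn_integral_scaled_norm_sq_complex[OF _ \<beta>]) simp
  also have "(\<integral>\<^sup>+s. ennreal (c * (s powr q * exp (- s))) * indicator {0..} s \<partial>lborel)
      = (\<integral>\<^sup>+s. ennreal c * ennreal (indicator {0..} s * s powr (q + 1 - 1) / exp s) \<partial>lborel)"
    using c by (intro nn_integral_cong)
      (simp add: ennreal_mult' exp_minus divide_inverse mult.assoc split: split_indicator)
  also have "\<dots> = ennreal c * ennreal (Gamma (q + 1))"
    using q by (simp add: nn_integral_cmult Gamma_conv_nn_integral_real)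
  also have "ennreal (pi / \<beta>) * \<dots> = ennreal (Gamma (q + 1) / \<beta> powr q)"
    using \<beta> q by (simp add: c_def Gamma_real_pos ennreal_mult[symmetric] field_simps)
  finally show ?thesis .
qed

lemma norm_monomial_powr:
  fixes z :: complex
  assumes "z \<noteq> 0" "0 < p"
  shows "norm (b * z ^ j) powr p = norm b powr p * ((norm z)^2) powr (real j * p / 2)"
proof -
  have nz: "0 < norm z" using assms by simp
  have "norm (b * z ^ j) powr p = norm b powr p * (norm z ^ j) powr p"
    by (simp add: norm_mult norm_power powr_mult)
  also have "(norm z ^ j) powr p = norm z powr (real j * p)"
  proof -
    have "norm z ^ j = norm z powr real j" using nz by (rule powr_realpow[symmetric])
    then show ?thesis by (simp add: powr_powr)
  qed
  also have "norm z powr (real j * p) = ((norm z)^2) powr (real j * p / 2)"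
  proof -
    have e: "(norm z)^2 = norm z powr real 2" using nz by (rule powr_realpow[symmetric])
    show ?thesis by (subst e, simp only: powr_powr) simp
  qed
  finally show ?thesis .
qed


lemma gauss_dens_pos: "0 < \<beta> \<Longrightarrow> 0 < gauss_dens \<beta> z"
  by (simp add: gauss_dens_def)

lemma gauss_dens_cis_mult: "gauss_dens \<beta> (cis t * z) = gauss_dens \<beta> z"
  by (simp add: gauss_dens_def norm_mult)

lemma borel_measurable_gauss_dens[measurable]: "gauss_dens \<beta> \<in> borel_measurable borel"
  unfolding gauss_dens_def[abs_def] by measurable

lemma nn_integral_monomial_gauss_dens:
  fixes b :: complex and p \<beta> :: real
  assumes p: "0 < p" and \<beta>: "0 < \<beta>"
  shows "(\<integral>\<^sup>+z. ennreal (norm (b * z ^ j) powr p * gauss_dens \<beta> z) \<partial>lborel)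
       = ennreal (norm b powr p * (Gamma (real j * p / 2 + 1) / \<beta> powr (real j * p / 2)))"
proof -
  define q where "q = real j * p / 2"
  have q: "0 \<le> q" using p by (simp add: q_def)
  have "(\<integral>\<^sup>+z. ennreal (norm (b * z ^ j) powr p * gauss_dens \<beta> z) \<partial>lborel)
      = (\<integral>\<^sup>+z. ennreal (norm b powr p) * ennreal (((norm z)^2) powr q * gauss_dens \<beta> z) \<partial>lborel)"
  proof (rule nn_integral_cong_AE)
    show "AE z in lborel. ennreal (norm (b * z ^ j) powr p * gauss_dens \<beta> z)
        = ennreal (norm b powr p) * ennreal (((norm z)^2) powr q * gauss_dens \<beta> z)"
      using AE_lborel_singleton[of 0]
    proof eventually_elim
      case (elim z)
      then show ?case using p gauss_dens_pos[OF \<beta>, of z]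
        by (simp add: norm_monomial_powr q_def ennreal_mult[symmetric] mult.assoc)
    qed
  qed
  also have "\<dots> = ennreal (norm b powr p) * ennreal (Gamma (q + 1) / \<beta> powr q)"
    using nn_integral_norm_sq_powr_gauss_dens[OF \<beta> q] by (subst nn_integral_cmult) auto
  also have "\<dots> = ennreal (norm b powr p * (Gamma (q + 1) / \<beta> powr q))"
    using q by (intro ennreal_mult[symmetric]) (auto intro!: divide_nonneg_nonneg less_imp_le[OF Gamma_real_pos])
  finally show ?thesis by (simp add: q_def)
qed

section \<open>Comparison of weighted integrals\<close>

lemma nn_integral_circle_powr_integral:
  assumes "0 < p" and "continuous_on UNIV f"
  shows "(\<integral>\<^sup>+t. ennreal (norm (f (cis t * z)) powr p) * indicator {0..2*pi} t \<partial>lborel)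
       = ennreal (circle_powr_integral p f z)"
  by (rule nn_integral_has_integral_lebesgue'[OF _ has_integral_circle_powr_integral[OF assms]]) simp

lemma circle_powr_integral_nonneg:
  assumes "0 < p" and "continuous_on UNIV f"
  shows "0 \<le> circle_powr_integral p f z"
  by (rule has_integral_nonneg[OF has_integral_circle_powr_integral[OF assms]]) simp

lemma borel_measurable_circle_powr_integral:
  assumes "0 < p" and "continuous_on UNIV f"
  shows "circle_powr_integral p f \<in> borel_measurable lborel"
proof -
  have [measurable]: "f \<in> borel_measurable borel"
    using assms(2) by (rule borel_measurable_continuous_onI)
  have "circle_powr_integral p f
      = (\<lambda>z. enn2real (\<integral>\<^sup>+t. ennreal (norm (f (cis t * z)) powr p) * indicator {0..2*pi} t \<partial>lborel))"
    using nn_integral_circle_powr_integral[OF assms] circle_powr_integral_nonneg[OF assms] by auto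
  also have "\<dots> \<in> borel_measurable lborel"
    by measurable
  finally show ?thesis .
qed

lemma nn_integral_eq_circle_powr_integral:
  fixes w :: "complex \<Rightarrow> real" and f :: "complex \<Rightarrow> complex"
  assumes p: "0 < p" and contf: "continuous_on UNIV f"
    and [measurable]: "w \<in> borel_measurable borel"
    and w_nonneg: "\<And>z. 0 \<le> w z" and w_rot: "\<And>t z. w (cis t * z) = w z"
  shows "ennreal (2*pi) * (\<integral>\<^sup>+z. ennreal (norm (f z) powr p * w z) \<partial>lborel)
       = (\<integral>\<^sup>+z. ennreal (w z * circle_powr_integral p f z) \<partial>lborel)"
proof -
  have [measurable]: "f \<in> borel_measurable borel"
    using contf by (rule borel_measurable_continuous_onI)
  have "ennreal (2*pi) * (\<integral>\<^sup>+z. ennreal (norm (f z) powr p * w z) \<partial>lborel)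
      = (\<integral>\<^sup>+z. \<integral>\<^sup>+t. ennreal (norm (f (cis t * z)) powr p * w (cis t * z)) * indicator {0..2*pi} t \<partial>lborel \<partial>lborel)"
    by (rule nn_integral_rotation_average[symmetric]) measurable
  also have "\<dots> = (\<integral>\<^sup>+z. ennreal (w z * circle_powr_integral p f z) \<partial>lborel)"
  proof (rule nn_integral_cong)
    fix z
    have "(\<integral>\<^sup>+t. ennreal (norm (f (cis t * z)) powr p * w (cis t * z)) * indicator {0..2*pi} t \<partial>lborel)
        = (\<integral>\<^sup>+t. ennreal (w z) * (ennreal (norm (f (cis t * z)) powr p) * indicator {0..2*pi} t) \<partial>lborel)"
      by (intro nn_integral_cong) (simp only: w_rot, simp add: w_nonneg ennreal_mult mult_ac)
    also have "\<dots> = ennreal (w z) * ennreal (circle_powr_integral p f z)"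
    proof -
      have "continuous_on UNIV (\<lambda>t. norm (f (cis t * z)) powr p)"
        using p by (intro continuous_on_powr' continuous_intros continuous_on_compose2[OF contf]) auto
      then have [measurable]: "(\<lambda>t. norm (f (cis t * z)) powr p) \<in> borel_measurable borel"
        by (rule borel_measurable_continuous_onI)
      show ?thesis
        by (subst nn_integral_cmult) (auto simp: nn_integral_circle_powr_integral[OF p contf])
    qed
    also have "\<dots> = ennreal (w z * circle_powr_integral p f z)"
      by (simp add: ennreal_mult w_nonneg circle_powr_integral_nonneg[OF p contf])
    finally show "(\<integral>\<^sup>+t. ennreal (norm (f (cis t * z)) powr p * w (cis t * z)) * indicator {0..2*pi} t \<partial>lborel)
        = ennreal (w z * circle_powr_integral p f z)" .
  qed
  finally show ?thesis .
qed

lemma nn_integral_monomial_le: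
  fixes w :: "complex \<Rightarrow> real" and f :: "complex \<Rightarrow> complex" and a :: "nat \<Rightarrow> complex"
  assumes p: "1 < p" and S: "\<And>z. (\<lambda>k. a k * z ^ k) sums f z" and contf: "continuous_on UNIV f"
    and [measurable]: "w \<in> borel_measurable borel"
    and w_nonneg: "\<And>z. 0 \<le> w z" and w_rot: "\<And>t z. w (cis t * z) = w z"
  shows "(\<integral>\<^sup>+z. ennreal (norm (a j * z ^ j) powr p * w z) \<partial>lborel)
       \<le> (\<integral>\<^sup>+z. ennreal (norm (f z) powr p * w z) \<partial>lborel)"
proof -
  have "ennreal (2*pi) * (\<integral>\<^sup>+z. ennreal (norm (a j * z ^ j) powr p * w z) \<partial>lborel)
      = (\<integral>\<^sup>+z. ennreal (w z * (2 * pi * norm (a j * z ^ j) powr p)) \<partial>lborel)"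
    by (subst nn_integral_cmult[symmetric])
      (auto intro!: nn_integral_cong simp: w_nonneg ennreal_mult[symmetric] mult_ac)
  also have "\<dots> \<le> (\<integral>\<^sup>+z. ennreal (w z * circle_powr_integral p f z) \<partial>lborel)"
    by (intro nn_integral_mono ennreal_leI mult_left_mono circle_powr_integral_ge[OF p S contf] w_nonneg)
  also have "\<dots> = ennreal (2*pi) * (\<integral>\<^sup>+z. ennreal (norm (f z) powr p * w z) \<partial>lborel)"
    using p contf w_nonneg w_rot by (intro nn_integral_eq_circle_powr_integral[symmetric]) auto
  finally show ?thesis
    by (subst (asm) ennreal_mult_le_mult_iff) auto
qed

lemma power_series_eq_monomial_if_circle_powr_integral_le:
  fixes f :: "complex \<Rightarrow> complex" and a :: "nat \<Rightarrow> complex"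
  assumes p: "1 < p" and S: "\<And>z. (\<lambda>k. a k * z ^ k) sums f z" and contf: "continuous_on UNIV f"
    and "z\<^sub>0 \<noteq> 0" and le: "circle_powr_integral p f z\<^sub>0 \<le> 2 * pi * norm (a j * z\<^sub>0 ^ j) powr p"
  shows "f z = a j * z ^ j"
proof -
  have "circle_powr_integral p f z\<^sub>0 = 2 * pi * norm (a j * z\<^sub>0 ^ j) powr p"
    using le circle_powr_integral_ge[OF p S contf, of j z\<^sub>0] by simp
  then have "f (cis t * z\<^sub>0) = a j * z\<^sub>0 ^ j * cis (real j * t)" if "t \<in> {0..2*pi}" for t
    using circle_powr_integral_eq_imp[OF p S contf] that by blast
  then show ?thesis
    by (rule power_series_eq_monomial_if_circle[OF S \<open>z\<^sub>0 \<noteq> 0\<close>])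
qed

lemma AE_lborel_ex_nonzero:
  assumes "AE x in (lborel :: 'a :: euclidean_space measure). P x"
  obtains x where "x \<noteq> 0" and "P x"
proof -
  have "AE x in (lborel :: 'a measure). P x \<and> x \<noteq> 0"
    using assms AE_lborel_singleton[of 0] by eventually_elim simp
  moreover have "ae_filter (lborel :: 'a measure) \<noteq> bot"
    by (simp add: ae_filter_eq_bot_iff)
  ultimately show ?thesis
    using eventually_happens' that by blast
qed

lemma nn_integral_monomial_eq_imp:
  fixes w :: "complex \<Rightarrow> real" and f :: "complex \<Rightarrow> complex" and a :: "nat \<Rightarrow> complex"
  assumes p: "1 < p" and S: "\<And>z. (\<lambda>k. a k * z ^ k) sums f z" and contf: "continuous_on UNIV f"
    and [measurable]: "w \<in> borel_measurable borel"
    and w_pos: "\<And>z. 0 < w z" and w_rot: "\<And>t z. w (cis t * z) = w z"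
    and fin: "(\<integral>\<^sup>+z. ennreal (norm (f z) powr p * w z) \<partial>lborel) \<noteq> \<infinity>"
    and eq: "(\<integral>\<^sup>+z. ennreal (norm (a j * z ^ j) powr p * w z) \<partial>lborel)
           = (\<integral>\<^sup>+z. ennreal (norm (f z) powr p * w z) \<partial>lborel)"
  shows "f z = a j * z ^ j"
proof -
  have w_nonneg: "0 \<le> w z" for z using w_pos[of z] by simp
  define L where "L z = ennreal (w z * (2 * pi * norm (a j * z ^ j) powr p))" for z
  define R where "R z = ennreal (w z * circle_powr_integral p f z)" for z
  have [measurable]: "circle_powr_integral p f \<in> borel_measurable lborel"
    using p contf by (intro borel_measurable_circle_powr_integral) auto
  have [measurable]: "L \<in> borel_measurable lborel" "R \<in> borel_measurable lborel"
    unfolding L_def[abs_def] R_def[abs_def] by measurable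
  have L_le_R: "L z \<le> R z" for z
    unfolding L_def R_def
    by (intro ennreal_leI mult_left_mono circle_powr_integral_ge[OF p S contf] w_nonneg)
  have L_eq: "(\<integral>\<^sup>+z. L z \<partial>lborel) = ennreal (2*pi) * (\<integral>\<^sup>+z. ennreal (norm (a j * z ^ j) powr p * w z) \<partial>lborel)"
    unfolding L_def
    by (subst nn_integral_cmult[symmetric])
      (auto intro!: nn_integral_cong simp: w_nonneg ennreal_mult[symmetric] mult_ac)
  also have "\<dots> = (\<integral>\<^sup>+z. R z \<partial>lborel)"
    unfolding eq R_def using p contf w_nonneg w_rot
    by (intro nn_integral_eq_circle_powr_integral) auto
  finally have int_eq: "(\<integral>\<^sup>+z. L z \<partial>lborel) = (\<integral>\<^sup>+z. R z \<partial>lborel)" .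
  have "AE z in lborel. R z \<le> L z"
  proof (rule ccontr)
    assume "\<not> (AE z in lborel. R z \<le> L z)"
    moreover have "(\<integral>\<^sup>+z. L z \<partial>lborel) \<noteq> \<infinity>"
      using L_eq eq fin by (simp add: ennreal_mult_eq_top_iff)
    ultimately have "(\<integral>\<^sup>+z. L z \<partial>lborel) < (\<integral>\<^sup>+z. R z \<partial>lborel)"
      using L_le_R by (intro nn_integral_less) auto
    then show False using int_eq by simp
  qed
  then obtain z\<^sub>0 where "z\<^sub>0 \<noteq> 0" and "R z\<^sub>0 \<le> L z\<^sub>0"
    by (rule AE_lborel_ex_nonzero)
  then have "circle_powr_integral p f z\<^sub>0 \<le> 2 * pi * norm (a j * z\<^sub>0 ^ j) powr p"
    unfolding L_def R_def using w_pos[of z\<^sub>0] by (simp add: ennreal_le_iff)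
  then show ?thesis
    by (rule power_series_eq_monomial_if_circle_powr_integral_le[OF p S contf \<open>z\<^sub>0 \<noteq> 0\<close>])
qed

section \<open>Fock norms\<close>

(* Also valid if the integral diverges: both sides are then 0. *)
lemma fock_norm_eq_nn_integral:
  assumes [measurable]: "g \<in> borel_measurable borel" and "0 < \<alpha>" and "0 < p"
  shows "fock_norm p \<alpha> g
       = enn2real (\<integral>\<^sup>+z. ennreal (norm (g z) powr p * gauss_dens (\<alpha> * p / 2) z) \<partial>lborel) powr (1 / p)"
proof -
  have "0 \<le> gauss_dens (\<alpha> * p / 2) z" for z
    using assms by (intro less_imp_le gauss_dens_pos) simp
  then show ?thesis
    unfolding fock_norm_def by (subst integral_eq_nn_integral) auto
qed

lemma fock_norm_monomial:
  assumes p: "0 < p" and \<alpha>: "0 < \<alpha>"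
  shows "fock_norm p \<alpha> (\<lambda>z. b * z ^ j)
       = norm b * Gamma (real j * p / 2 + 1) powr (1 / p) / (\<alpha> * p / 2) powr (real j / 2)"
proof -
  define \<beta> where "\<beta> = \<alpha> * p / 2"
  define G where "G = Gamma (real j * p / 2 + 1)"
  have \<beta>: "0 < \<beta>" using p \<alpha> by (simp add: \<beta>_def)
  have G: "0 < G" unfolding G_def using p by (intro Gamma_real_pos add_nonneg_pos) auto
  have "fock_norm p \<alpha> (\<lambda>z. b * z ^ j) = (norm b powr p * (G / \<beta> powr (real j * p / 2))) powr (1 / p)"
    using fock_norm_eq_nn_integral[of "\<lambda>z. b * z ^ j", OF _ \<alpha> p] nn_integral_monomial_gauss_dens[OF p \<beta>] G \<beta>
    by (simp add: \<beta>_def G_def)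
  also have "\<dots> = norm b * (G powr (1 / p) / \<beta> powr (real j / 2))"
    using p G \<beta> by (simp add: powr_mult powr_divide powr_powr)
  finally show ?thesis by (simp add: \<beta>_def G_def)
qed

lemma
  fixes f :: "complex \<Rightarrow> complex" and a :: "nat \<Rightarrow> complex"
  assumes p: "1 < p" and \<alpha>: "0 < \<alpha>" and f: "in_fock p \<alpha> f"
    and S: "\<And>z. (\<lambda>k. a k * z ^ k) sums f z"
  shows fock_norm_monomial_le: "fock_norm p \<alpha> (\<lambda>z. a j * z ^ j) \<le> fock_norm p \<alpha> f"
    and fock_norm_monomial_eq_iff:
      "fock_norm p \<alpha> (\<lambda>z. a j * z ^ j) = fock_norm p \<alpha> f \<longleftrightarrow> (\<exists>c. \<forall>z. f z = c * z ^ j)"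
proof -
  define \<beta> where "\<beta> = \<alpha> * p / 2"
  have \<beta>: "0 < \<beta>" using p \<alpha> by (simp add: \<beta>_def)
  have contf: "continuous_on UNIV f"
    using f by (auto simp: in_fock_def intro: holomorphic_on_imp_continuous_on)
  have meas_f: "f \<in> borel_measurable borel"
    using contf by (rule borel_measurable_continuous_onI)
  have meas_monomial: "(\<lambda>z. a j * z ^ j) \<in> borel_measurable borel"
    by (intro borel_measurable_continuous_onI continuous_intros)
  define NF where "NF = (\<integral>\<^sup>+z. ennreal (norm (f z) powr p * gauss_dens \<beta> z) \<partial>lborel)"
  define NG where "NG = (\<integral>\<^sup>+z. ennreal (norm (a j * z ^ j) powr p * gauss_dens \<beta> z) \<partial>lborel)"
  have NF_fin: "NF \<noteq> \<infinity>"
    using f integrableD(2) by (auto simp: in_fock_def NF_def \<beta>_def)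
  have NG_le_NF: "NG \<le> NF"
    unfolding NG_def NF_def using p S contf gauss_dens_pos[OF \<beta>]
    by (intro nn_integral_monomial_le) (auto intro: less_imp_le simp: gauss_dens_cis_mult)
  have norm_f: "fock_norm p \<alpha> f = enn2real NF powr (1 / p)"
    unfolding NF_def \<beta>_def using meas_f \<alpha> p by (intro fock_norm_eq_nn_integral) auto
  have norm_monomial: "fock_norm p \<alpha> (\<lambda>z. a j * z ^ j) = enn2real NG powr (1 / p)"
    unfolding NG_def \<beta>_def using meas_monomial \<alpha> p by (intro fock_norm_eq_nn_integral) auto
  show "fock_norm p \<alpha> (\<lambda>z. a j * z ^ j) \<le> fock_norm p \<alpha> f"
    unfolding norm_f norm_monomial using NG_le_NF NF_fin p by (intro powr_mono2 enn2real_mono) (auto simp: less_top)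
  show "fock_norm p \<alpha> (\<lambda>z. a j * z ^ j) = fock_norm p \<alpha> f \<longleftrightarrow> (\<exists>c. \<forall>z. f z = c * z ^ j)"
  proof
    assume "fock_norm p \<alpha> (\<lambda>z. a j * z ^ j) = fock_norm p \<alpha> f"
    then have "(enn2real NG powr (1 / p)) powr p = (enn2real NF powr (1 / p)) powr p"
      unfolding norm_f norm_monomial by simp
    then have "enn2real NG = enn2real NF"
      using p by (simp add: powr_powr)
    have "NG < \<infinity>"
      using NG_le_NF NF_fin by (simp add: le_less_trans less_top)
    then have "NG = ennreal (enn2real NG)" by simp
    also have "\<dots> = ennreal (enn2real NF)" using \<open>enn2real NG = enn2real NF\<close> by simp
    also have "\<dots> = NF" using NF_fin by (simp add: less_top)
    finally have "\<forall>z. f z = a j * z ^ j"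
      using nn_integral_monomial_eq_imp[OF p S contf borel_measurable_gauss_dens gauss_dens_pos[OF \<beta>]
          gauss_dens_cis_mult] NF_fin
      unfolding NG_def NF_def by blast
    then show "\<exists>c. \<forall>z. f z = c * z ^ j" by blast
  next
    assume "\<exists>c. \<forall>z. f z = c * z ^ j"
    then obtain c where c: "\<And>z. f z = c * z ^ j" by blast
    then have "f = (\<lambda>z. a j * z ^ j)"
      using power_series_coeff_eq_if_monomial[OF S c] by auto
    then show "fock_norm p \<alpha> (\<lambda>z. a j * z ^ j) = fock_norm p \<alpha> f" by simp
  qed
qed

theorem corollary4p7:
  fixes p \<alpha> :: real and f :: "complex \<Rightarrow> complex" and a :: "nat \<Rightarrow> complex" and j :: nat
  assumes "1 < p" and "0 < \<alpha>"
    and "in_fock p \<alpha> f"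
    and "\<And>z. (\<lambda>k. a k * z ^ k) sums f z"
  shows "fock_norm p \<alpha> (\<lambda>z. a j * z ^ j) \<le> fock_norm p \<alpha> f
    \<and> norm (a j) \<le> (\<alpha> * p / 2) powr (real j / 2) / Gamma (real j * p / 2 + 1) powr (1 / p)
                       * fock_norm p \<alpha> f
    \<and> (fock_norm p \<alpha> (\<lambda>z. a j * z ^ j) = fock_norm p \<alpha> f \<longleftrightarrow> (\<exists>c. \<forall>z. f z = c * z ^ j))
    \<and> (norm (a j) = (\<alpha> * p / 2) powr (real j / 2) / Gamma (real j * p / 2 + 1) powr (1 / p)
                       * fock_norm p \<alpha> f \<longleftrightarrow> (\<exists>c. \<forall>z. f z = c * z ^ j))"
proof -
  define \<kappa> where "\<kappa> = (\<alpha> * p / 2) powr (real j / 2) / Gamma (real j * p / 2 + 1) powr (1 / p)"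
  have "0 < Gamma (real j * p / 2 + 1)"
    using assms(1) by (intro Gamma_real_pos add_nonneg_pos) auto
  then have "0 < \<kappa>" and norm_aj: "norm (a j) = \<kappa> * fock_norm p \<alpha> (\<lambda>z. a j * z ^ j)"
    using assms(1,2) fock_norm_monomial[of p \<alpha> "a j" j] by (simp_all add: \<kappa>_def)
  then show ?thesis
    unfolding \<kappa>_def[symmetric] norm_aj
    using fock_norm_monomial_le[OF assms] fock_norm_monomial_eq_iff[OF assms]
    by (simp add: mult_left_mono)
qed

end
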